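(* If $G$ is a finite directed acyclic graph, then the complex of directed trees $\mathrm{DT}(G)$ is shellable.
   Context: All graphs are finite and directed. A directed acyclic graph is a directed graph with no directed cycles. A directed forest is a set of edges which, viewed as a graph, is acyclic and has at most one edge directed to each vertex. The complex of directed trees $\mathrm{DT}(G)$ is the simplicial complex whose vertex set is the edge set $E(G)$, a set of edges being a simplex iff it is a directed forest. A simplicial complex $\Delta$ is shellable if its maximal faces can be ordered $F_1,\dots,F_n$ such that for all $1\le i<k\le n$ there exist $1\le j<k$ and $e\in F_k$ with $F_i\cap F_k\subseteq F_j\cap F_k=F_k\setminus\{e\}$. *)

theory Defs
  imports "Graph_Theory.Digraph"
begin

definition directed_forest :: "('a,'b) pre_digraph \<Rightarrow> 'b set \<Rightarrow> bool" where
  "directed_forest G F \<longleftrightarrow>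
     acyclic ((\<lambda>e. (tail G e, head G e)) ` F) \<and>
     (\<forall>e1\<in>F. \<forall>e2\<in>F. head G e1 = head G e2 \<longrightarrow> e1 = e2)"

text \<open>Complex of directed trees, as its set of faces (vertex set = arcs G).\<close>
definition DT :: "('a,'b) pre_digraph \<Rightarrow> 'b set set" where
  "DT G = {F. F \<subseteq> arcs G \<and> directed_forest G F}"

definition facets :: "'x set set \<Rightarrow> 'x set set" where
  "facets \<Delta> = {F \<in> \<Delta>. \<forall>H\<in>\<Delta>. F \<subseteq> H \<longrightarrow> H = F}"

text \<open>Shellability; list index i stands for F_(i+1).\<close>
definition shellable :: "'x set set \<Rightarrow> bool" where
  "shellable \<Delta> \<longleftrightarrow> (\<exists>Fs. distinct Fs \<and> set Fs = facets \<Delta> \<and>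
     (\<forall>i k. i < k \<longrightarrow> k < length Fs \<longrightarrow>
        (\<exists>j<k. \<exists>e\<in>Fs ! k. Fs ! i \<inter> Fs ! k \<subseteq> Fs ! j \<inter> Fs ! k \<and>
                         Fs ! j \<inter> Fs ! k = Fs ! k - {e})))"

end

theory Submission
  imports Defs
begin

text \<open>In an acyclic graph every set of arcs is acyclic, so the directed forests are exactly the
  sets of arcs with pairwise distinct heads, and the facets choose one incoming arc for every
  vertex that has one. Fix an injective weight on the arcs and list the facets by increasing
  total weight. If a facet A precedes a facet B, then at some vertex the arc e chosen by B is
  heavier than the arc a chosen by A, since otherwise B would be strictly lighter than A.
  Replacing e by a in B gives a lighter, hence earlier, facet meeting B in B - {e} and
  containing A \<inter> B.\<close>

lemma transversal_exchange_heavier: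
  fixes w :: "'a \<Rightarrow> 'c::{ordered_cancel_comm_monoid_add, linorder}"
  assumes "finite A" "finite B"
    and inj_A: "inj_on h A" and inj_B: "inj_on h B" and same_image: "h ` A = h ` B"
    and "inj_on w (A \<union> B)" and "A \<noteq> B" and "sum w A \<le> sum w B"
  shows "\<exists>e\<in>B - A. \<exists>a\<in>A - B. h a = h e \<and> w a < w e"
proof (rule ccontr)
  assume no_heavier: "\<not> ?thesis"
  have diff_image: "h ` (X - Y) \<subseteq> h ` (Y - X)"
    if inj_X: "inj_on h X" and "h ` X = h ` Y" for X Y
  proof
    fix v assume "v \<in> h ` (X - Y)"
    then obtain x where x: "x \<in> X" "x \<notin> Y" "v = h x" by blast
    then obtain y where "y \<in> Y" "h y = h x" using \<open>h ` X = h ` Y\<close> by (metis imageE imageI)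
    moreover have "y \<notin> X" using inj_X x calculation by (metis inj_onD)
    ultimately show "v \<in> h ` (Y - X)" using x by (metis DiffI imageI)
  qed
  define D where "D = h ` (B - A)"
  have D_eq: "h ` (A - B) = D"
    using diff_image[OF inj_A same_image] diff_image[OF inj_B same_image[symmetric]]
    unfolding D_def by blast
  have bij_BA: "bij_betw h (B - A) D" using inj_B by (simp add: D_def bij_betw_def inj_on_diff)
  have bij_AB: "bij_betw h (A - B) D" using inj_A D_eq by (simp add: bij_betw_def inj_on_diff)
  define \<phi> where "\<phi> = inv_into (A - B) h \<circ> h"
  have bij_\<phi>: "bij_betw \<phi> (B - A) (A - B)"
    unfolding \<phi>_def using bij_BA bij_betw_inv_into[OF bij_AB] by (rule bij_betw_trans)
  have lighter: "w e < w (\<phi> e)" if e: "e \<in> B - A" for e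
  proof -
    have "\<phi> e \<in> A - B" using bij_\<phi> e by (meson bij_betwE)
    moreover have "h (\<phi> e) = h e"
      unfolding \<phi>_def using bij_AB bij_BA e by (simp add: bij_betw_inv_into_right bij_betwE)
    ultimately have "w e \<le> w (\<phi> e)" using no_heavier e by (meson not_less)
    moreover have "w (\<phi> e) \<noteq> w e"
    proof
      assume "w (\<phi> e) = w e"
      then have "\<phi> e = e" using \<open>inj_on w (A \<union> B)\<close> \<open>\<phi> e \<in> A - B\<close> e by (auto dest: inj_onD)
      then show False using \<open>\<phi> e \<in> A - B\<close> e by simp
    qed
    ultimately show ?thesis by simp
  qed
  have "B - A \<noteq> {}" using D_eq \<open>A \<noteq> B\<close> unfolding D_def by auto
  then have diff_lighter: "sum w (B - A) < sum w (A - B)"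
    using lighter \<open>finite B\<close> sum.reindex_bij_betw[OF bij_\<phi>, of w]
    by (metis (mono_tags) comp_apply finite_Diff sum_strict_mono)
  have "sum w B = sum w (B - A) + sum w (A \<inter> B)"
    using sum.Int_Diff[OF \<open>finite B\<close>, of w A] by (simp add: Int_commute add.commute)
  also have "\<dots> < sum w (A - B) + sum w (A \<inter> B)"
    using diff_lighter by (rule add_strict_right_mono)
  also have "\<dots> = sum w A"
    using sum.Int_Diff[OF \<open>finite A\<close>, of w B] by (simp add: add.commute)
  finally show False using \<open>sum w A \<le> sum w B\<close> by simp
qed

lemma facets_inj_on_subsets:
  "facets {F. F \<subseteq> E \<and> inj_on h F} = {F. F \<subseteq> E \<and> inj_on h F \<and> h ` F = h ` E}"
  (is "facets ?\<Delta> = _")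
proof (intro set_eqI iffI)
  fix F assume "F \<in> facets ?\<Delta>"
  then have F: "F \<subseteq> E" "inj_on h F" and maximal: "\<And>H. H \<in> ?\<Delta> \<Longrightarrow> F \<subseteq> H \<Longrightarrow> H = F"
    by (auto simp: facets_def)
  have "h x \<in> h ` F" if "x \<in> E" for x
  proof (rule ccontr)
    assume "h x \<notin> h ` F"
    then have "insert x F \<in> ?\<Delta>" using F \<open>x \<in> E\<close> by auto
    then have "insert x F = F" by (intro maximal) auto
    then show False using \<open>h x \<notin> h ` F\<close> by auto
  qed
  then show "F \<in> {F. F \<subseteq> E \<and> inj_on h F \<and> h ` F = h ` E}" using F by auto
next
  fix F assume F: "F \<in> {F. F \<subseteq> E \<and> inj_on h F \<and> h ` F = h ` E}"
  have "H = F" if "H \<subseteq> E" "inj_on h H" "F \<subseteq> H" for H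
  proof -
    have "x \<in> F" if "x \<in> H" for x
    proof -
      have "h x \<in> h ` F" using F \<open>x \<in> H\<close> \<open>H \<subseteq> E\<close> by blast
      then obtain f where "f \<in> F" "h f = h x" by auto
      then show ?thesis using \<open>inj_on h H\<close> \<open>F \<subseteq> H\<close> \<open>x \<in> H\<close> by (metis inj_onD subsetD)
    qed
    then show ?thesis using \<open>F \<subseteq> H\<close> by blast
  qed
  then show "F \<in> facets ?\<Delta>" using F by (auto simp: facets_def)
qed

lemma DT_acyclic_eq:
  assumes "acyclic (arcs_ends G)"
  shows "DT G = {F. F \<subseteq> arcs G \<and> inj_on (head G) F}"
proof -
  have "directed_forest G F \<longleftrightarrow> inj_on (head G) F" if "F \<subseteq> arcs G" for F
  proof -
    have "(\<lambda>e. (tail G e, head G e)) ` F \<subseteq> arcs_ends G"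
      using that by (auto simp: arcs_ends_def arc_to_ends_def)
    then have "acyclic ((\<lambda>e. (tail G e, head G e)) ` F)" by (rule acyclic_subset[OF assms])
    then show ?thesis unfolding directed_forest_def inj_on_def by blast
  qed
  then show ?thesis by (auto simp: DT_def)
qed

lemma facets_DT_acyclic:
  assumes "acyclic (arcs_ends G)"
  shows "facets (DT G) = {F. F \<subseteq> arcs G \<and> inj_on (head G) F \<and> head G ` F = head G ` arcs G}"
  unfolding DT_acyclic_eq[OF assms] by (rule facets_inj_on_subsets)

lemma shellable_if_lighter_exchange:
  fixes \<mu> :: "'x set \<Rightarrow> 'c::linorder"
  assumes "finite (facets \<Delta>)"
    and exchange: "\<And>A B. A \<in> facets \<Delta> \<Longrightarrow> B \<in> facets \<Delta> \<Longrightarrow> A \<noteq> B \<Longrightarrow> \<mu> A \<le> \<mu> B \<Longrightarrow>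
      \<exists>C\<in>facets \<Delta>. \<exists>e\<in>B. \<mu> C < \<mu> B \<and> A \<inter> B \<subseteq> C \<inter> B \<and> C \<inter> B = B - {e}"
  shows "shellable \<Delta>"
proof -
  obtain L where L: "set L = facets \<Delta>" "distinct L" using assms(1) finite_distinct_list by blast
  define Fs where "Fs = sort_key \<mu> L"
  have Fs: "distinct Fs" "set Fs = facets \<Delta>" "sorted (map \<mu> Fs)"
    using L by (auto simp: Fs_def distinct_sort)
  have "\<exists>j<k. \<exists>e\<in>Fs ! k. Fs ! i \<inter> Fs ! k \<subseteq> Fs ! j \<inter> Fs ! k \<and> Fs ! j \<inter> Fs ! k = Fs ! k - {e}"
    if "i < k" "k < length Fs" for i k
  proof -
    have "Fs ! i \<in> facets \<Delta>" "Fs ! k \<in> facets \<Delta>" "Fs ! i \<noteq> Fs ! k" "\<mu> (Fs ! i) \<le> \<mu> (Fs ! k)"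
      using Fs that by (auto simp: nth_eq_iff_index_eq sorted_iff_nth_mono_less)
    then obtain C e where C: "C \<in> facets \<Delta>" "e \<in> Fs ! k" "\<mu> C < \<mu> (Fs ! k)"
      "Fs ! i \<inter> Fs ! k \<subseteq> C \<inter> Fs ! k" "C \<inter> Fs ! k = Fs ! k - {e}"
      using exchange by metis
    then obtain j where j: "j < length Fs" "Fs ! j = C" using Fs(2) by (metis in_set_conv_nth)
    have "j < k"
    proof (rule ccontr)
      assume "\<not> j < k"
      then have "\<mu> (Fs ! k) \<le> \<mu> (Fs ! j)" using Fs(3) j(1) by (simp add: sorted_iff_nth_mono)
      then show False using C(3) j(2) by simp
    qed
    then show ?thesis using C j by blast
  qed
  then show ?thesis unfolding shellable_def using Fs(1,2) by blast
qed

lemma facets_DT_lighter_exchange: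
  fixes r :: "'b \<Rightarrow> 'c::{ordered_cancel_comm_monoid_add, linorder}"
  assumes acyc: "acyclic (arcs_ends G)" and fin: "finite (arcs G)" and r: "inj_on r (arcs G)"
    and A: "A \<in> facets (DT G)" and B: "B \<in> facets (DT G)" and "A \<noteq> B" and "sum r A \<le> sum r B"
  shows "\<exists>C\<in>facets (DT G). \<exists>e\<in>B. sum r C < sum r B \<and> A \<inter> B \<subseteq> C \<inter> B \<and> C \<inter> B = B - {e}"
proof -
  note facets = facets_DT_acyclic[OF acyc]
  have A': "A \<subseteq> arcs G" "inj_on (head G) A" "head G ` A = head G ` arcs G"
    and B': "B \<subseteq> arcs G" "inj_on (head G) B" "head G ` B = head G ` arcs G"
    using A B unfolding facets by auto
  have "finite A" "finite B" using A'(1) B'(1) fin by (auto intro: finite_subset)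
  moreover have "inj_on r (A \<union> B)" using r A'(1) B'(1) by (auto intro: inj_on_subset)
  ultimately obtain e a where e: "e \<in> B - A" and a: "a \<in> A - B" "head G a = head G e" "r a < r e"
    using transversal_exchange_heavier[of A B "head G" r] A' B' \<open>A \<noteq> B\<close> \<open>sum r A \<le> sum r B\<close>
    by auto
  define C where "C = insert a (B - {e})"
  have "head G ` C = head G ` B" using a e unfolding C_def by auto
  moreover have "inj_on (head G) C" using B'(2) a e unfolding C_def by (auto simp: inj_on_def)
  ultimately have "C \<in> facets (DT G)" using A'(1) B' a unfolding facets C_def by auto
  moreover have "sum r C < sum r B"
  proof -
    have "sum r C = r a + sum r (B - {e})" using \<open>finite B\<close> a unfolding C_def by simp
    also have "\<dots> < r e + sum r (B - {e})" using a(3) by (rule add_strict_right_mono)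
    also have "\<dots> = sum r B" using \<open>finite B\<close> e by (metis DiffD1 sum.remove)
    finally show ?thesis .
  qed
  moreover have "A \<inter> B \<subseteq> C \<inter> B" "C \<inter> B = B - {e}" using a e unfolding C_def by auto
  ultimately show ?thesis using e by blast
qed

theorem corollary2p10:
  fixes G :: "('a,'b) pre_digraph"
  assumes "fin_digraph G"
    and "acyclic (arcs_ends G)"
  shows "shellable (DT G)"
proof -
  have fin: "finite (arcs G)" using assms(1) fin_digraph.finite_arcs by blast
  obtain r :: "'b \<Rightarrow> nat" where r: "inj_on r (arcs G)"
    using finite_imp_inj_to_nat_seg[OF fin] by blast
  have "finite (facets (DT G))"
    using fin by (auto simp: facets_DT_acyclic[OF assms(2)] intro: finite_subset[of _ "Pow (arcs G)"])
  then show ?thesis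
    using facets_DT_lighter_exchange[OF assms(2) fin r]
    by (rule shellable_if_lighter_exchange)
qed

end
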